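(* For all non-negative integers $m$ and $l$, $$\binom{m+l}{m}=\sum_{n=0}^{m}\frac{1}{2^{m+n}}\binom{m+n}{m}\binom{2l+m-n}{2l}.$$ *)

theory Defs
  imports Complex_Main
begin

end

theory Submission
  imports Defs
begin

text \<open>
  Reversing the order of summation turns the right-hand side into \<open>S(m, 2l) / 4^m\<close>, where
  \<open>S(m, a) = \<Sum>k=0..m. 2^k C(2m - k, m) C(a + k, k)\<close>. Creative telescoping in \<open>k\<close> yields the
  recurrence \<open>(a + 2) S(m, a + 2) = (2m + a + 2) S(m, a)\<close>, and \<open>S(m, 0) = 4^m\<close> is the classical
  identity \<open>\<Sum>k=0..m. C(m + k, k) / 2^k = 2^m\<close>. Induction on \<open>l\<close> then gives
  \<open>S(m, 2l) = 4^m C(m + l, m)\<close>.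
\<close>

definition binom_sum_term :: "nat \<Rightarrow> nat \<Rightarrow> nat \<Rightarrow> nat" where
  "binom_sum_term m a k = 2 ^ k * ((2 * m - k) choose m) * ((a + k) choose k)"

definition binom_sum :: "nat \<Rightarrow> nat \<Rightarrow> nat" where
  "binom_sum m a = (\<Sum>k = 0..m. binom_sum_term m a k)"

lemma binom_sum_term_Suc:
  assumes "k \<le> m"
  shows "(k + 1) * (2 * m - k) * binom_sum_term m a (k + 1) =
    2 * (m - k) * (a + k + 1) * binom_sum_term m a k"
proof -
  have top: "(2 * m - k) * ((2 * m - (k + 1)) choose m) = (m - k) * ((2 * m - k) choose m)"
    using binomial_absorb_comp[of "2 * m - k" m] assms by (simp add: algebra_simps)
  have bottom: "(k + 1) * ((a + (k + 1)) choose (k + 1)) = (a + k + 1) * ((a + k) choose k)"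
    using Suc_times_binomial[of k "a + k"] by simp
  have "(k + 1) * (2 * m - k) * binom_sum_term m a (k + 1) =
      2 ^ (k + 1) * ((2 * m - k) * ((2 * m - (k + 1)) choose m)) *
      ((k + 1) * ((a + (k + 1)) choose (k + 1)))"
    unfolding binom_sum_term_def by (simp only: ac_simps)
  also have "\<dots> = 2 * (m - k) * (a + k + 1) * binom_sum_term m a k"
    unfolding top bottom binom_sum_term_def by (simp add: algebra_simps)
  finally show ?thesis .
qed

lemma binomial_shift_by_two:
  "(a + 1) * (a + 2) * ((a + 2 + k) choose k) = (a + k + 1) * (a + k + 2) * ((a + k) choose k)"
proof -
  have "(a + 1) * ((a + k + 1) choose (a + 1)) = (a + k + 1) * ((a + k) choose a)"
       "(a + 2) * ((a + k + 2) choose (a + 2)) = (a + k + 2) * ((a + k + 1) choose (a + 1))"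
    using Suc_times_binomial[of a "a + k"] Suc_times_binomial[of "a + 1" "a + k + 1"] by simp_all
  moreover have "(a + 2 + k) choose k = (a + k + 2) choose (a + 2)" "(a + k) choose k = (a + k) choose a"
    using binomial_symmetric[of k "a + k + 2"] binomial_symmetric[of a "a + k"]
    by (simp_all add: ac_simps)
  ultimately show ?thesis
    by (metis mult.assoc mult.left_commute)
qed

text \<open>Gosper certificate of Zeilberger's algorithm for the recurrence in the parameter \<open>a\<close>.\<close>
definition binom_sum_certificate :: "nat \<Rightarrow> nat \<Rightarrow> nat \<Rightarrow> int" where
  "binom_sum_certificate m a k = int k * (2 * int m + 1 - int k) * int (binom_sum_term m a k)"

lemma binom_sum_term_creative_telescoping:
  assumes "k \<le> m"
  shows "int ((a + 1) * (a + 2) * binom_sum_term m (a + 2) k) =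
    int ((a + 1) * (2 * m + a + 2) * binom_sum_term m a k)
    + (binom_sum_certificate m a k - binom_sum_certificate m a (Suc k))"
proof -
  have "(a + 1) * (a + 2) * binom_sum_term m (a + 2) k = (a + k + 1) * (a + k + 2) * binom_sum_term m a k"
    using binomial_shift_by_two[of a k] unfolding binom_sum_term_def
    by (metis mult.assoc mult.left_commute)
  moreover have "binom_sum_certificate m a (Suc k) =
      2 * (int m - int k) * (int a + int k + 1) * int (binom_sum_term m a k)"
  proof -
    have "int (k + 1) * int (2 * m - k) * int (binom_sum_term m a (k + 1)) =
        2 * int (m - k) * int (a + k + 1) * int (binom_sum_term m a k)"
      using arg_cong[OF binom_sum_term_Suc[OF assms, of a], of int] by (simp only: of_nat_mult of_nat_numeral)
    then show ?thesis
      unfolding binom_sum_certificate_def using assms by (simp add: of_nat_diff algebra_simps)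
  qed
  ultimately show ?thesis
    unfolding binom_sum_certificate_def by (simp add: algebra_simps)
qed

lemma binom_sum_certificate_0: "binom_sum_certificate m a 0 = 0"
  by (simp add: binom_sum_certificate_def)

lemma binom_sum_certificate_Suc_upper: "binom_sum_certificate m a (Suc m) = 0"
  by (cases "m = 0") (simp_all add: binom_sum_certificate_def binom_sum_term_def binomial_eq_0)

lemma binom_sum_recurrence:
  "(a + 2) * binom_sum m (a + 2) = (2 * m + a + 2) * binom_sum m a"
proof -
  let ?C = "binom_sum_certificate m a"
  have "int ((a + 1) * ((a + 2) * binom_sum m (a + 2))) =
      (\<Sum>k<Suc m. int ((a + 1) * (a + 2) * binom_sum_term m (a + 2) k))"
    unfolding binom_sum_def atLeast0AtMost lessThan_Suc_atMost
    by (simp only: of_nat_sum sum_distrib_left mult.assoc)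
  also have "\<dots> = (\<Sum>k<Suc m. int ((a + 1) * (2 * m + a + 2) * binom_sum_term m a k) + (?C k - ?C (Suc k)))"
    by (intro sum.cong refl binom_sum_term_creative_telescoping) simp
  also have "\<dots> = int ((a + 1) * ((2 * m + a + 2) * binom_sum m a)) + (?C 0 - ?C (Suc m))"
    unfolding sum.distrib sum_lessThan_telescope'
    unfolding binom_sum_def atLeast0AtMost lessThan_Suc_atMost
    by (simp only: of_nat_sum sum_distrib_left mult.assoc)
  finally have "(a + 1) * ((a + 2) * binom_sum m (a + 2)) = (a + 1) * ((2 * m + a + 2) * binom_sum m a)"
    unfolding binom_sum_certificate_0 binom_sum_certificate_Suc_upper
    by (simp only: diff_self add_0_right of_nat_eq_iff)
  then show ?thesis
    by (simp only: mult_left_cancel[of "a + 1"] add_eq_0_iff_both_eq_0 one_neq_zero simp_thms)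
qed

lemma binom_sum_reflected:
  "real (binom_sum m a) =
    4 ^ m * (\<Sum>n = 0..m. 1 / 2 ^ (m + n) * real ((m + n) choose m) * real ((a + m - n) choose a))"
proof -
  have "(\<Sum>n = 0..m. 1 / 2 ^ (m + n) * real ((m + n) choose m) * real ((a + m - n) choose a)) =
      (\<Sum>k = 0..m. 1 / 2 ^ (m + (m + 0 - k)) * real ((m + (m + 0 - k)) choose m)
        * real ((a + m - (m + 0 - k)) choose a))"
    by (rule sum.atLeastAtMost_rev)
  also have "\<dots> = (\<Sum>k = 0..m. real (binom_sum_term m a k) / 4 ^ m)"
  proof (rule sum.cong)
    fix k assume "k \<in> {0..m}"
    then have k: "k \<le> m" by simp
    have "(4::real) ^ m = 2 ^ (2 * m - k) * 2 ^ k"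
      using k by (simp add: power_mult flip: power_add)
    moreover have "(a + k) choose a = (a + k) choose k"
      using binomial_symmetric[of k "a + k"] by simp
    moreover have "m + (m + 0 - k) = 2 * m - k" "a + m - (m + 0 - k) = a + k"
      using k by simp_all
    ultimately show "1 / 2 ^ (m + (m + 0 - k)) * real ((m + (m + 0 - k)) choose m)
        * real ((a + m - (m + 0 - k)) choose a) = real (binom_sum_term m a k) / 4 ^ m"
      unfolding binom_sum_term_def by (simp add: field_simps)
  qed simp
  finally show ?thesis
    unfolding binom_sum_def sum_divide_distrib[symmetric] by simp
qed

lemma binom_sum_0: "binom_sum m 0 = 4 ^ m"
proof -
  have sym: "(m + n) choose m = (m + n) choose n" for n
    using binomial_symmetric[of n "m + n"] by simp
  have "(\<Sum>n = 0..m. 1 / 2 ^ (m + n) * real ((m + n) choose m) * real ((0 + m - n) choose 0))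
      = (\<Sum>n = 0..m. real ((m + n) choose n) / 2 ^ n) / 2 ^ m"
    unfolding sum_divide_distrib by (rule sum.cong) (simp_all add: sym power_add)
  also have "\<dots> = 1"
    using gbinomial_sum_nat_pow2[of m, where ?'a = real] by (simp add: binomial_gbinomial atLeast0AtMost)
  finally have "real (binom_sum m 0) = real (4 ^ m)"
    unfolding binom_sum_reflected by simp
  then show ?thesis
    by (simp only: of_nat_eq_iff)
qed

lemma binom_sum_even: "binom_sum m (2 * l) = 4 ^ m * ((m + l) choose m)"
proof (induction l)
  case 0
  then show ?case by (simp add: binom_sum_0)
next
  case (Suc l)
  have absorb: "(m + l + 1) * ((m + l) choose m) = (l + 1) * ((m + Suc l) choose m)"
    using Suc_times_binomial_add[of m l] Suc_times_binomial[of m "m + l"] by simp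
  have "2 * ((l + 1) * binom_sum m (2 * l + 2)) = 2 * ((m + l + 1) * binom_sum m (2 * l))"
    using binom_sum_recurrence[of "2 * l" m] by (simp add: algebra_simps)
  then have "(l + 1) * binom_sum m (2 * Suc l) = (m + l + 1) * binom_sum m (2 * l)"
    by simp
  also have "\<dots> = (l + 1) * (4 ^ m * ((m + Suc l) choose m))"
    unfolding Suc.IH using absorb by (metis mult.left_commute)
  finally show ?case
    by (simp only: mult_left_cancel[of "l + 1"] add_eq_0_iff_both_eq_0 one_neq_zero simp_thms)
qed

theorem mainTheorem3:
  fixes m l :: nat
  shows "real ((m + l) choose m) =
    (\<Sum>n = 0..m. (1 / 2 ^ (m + n)) * real ((m + n) choose m) * real ((2 * l + m - n) choose (2 * l)))"
  using binom_sum_reflected[of m "2 * l"] by (simp add: binom_sum_even)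

end
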